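(* Let $K$ be a field of characteristic $p>0$, and let $\sigma,\tau$ be $K$-algebra automorphisms of the ring $\mathcal{D}(P_n)$ of differential operators on $P_n=K[x_1,\ldots,x_n]$. Then $\sigma=\tau$ if and only if $\sigma(x_i)=\tau(x_i)$ for all $i=1,\ldots,n$.
   Context: For $i=1,\ldots,n$ and $k\in\mathbb{N}$, $\partial_i^{[k]}=\partial_i^k/k!$ denotes the $K$-linear map of $P_n$ given by $\partial_i^{[k]}(x^m)=\binom{m_i}{k}x^{m-ke_i}$ (zero if $m_i<k$), where $x^m=x_1^{m_1}\cdots x_n^{m_n}$ and $e_1,\ldots,e_n$ is the standard basis of $\mathbb{Z}^n$. The ring $\mathcal{D}(P_n)$ is the subalgebra of $\mathrm{End}_K(P_n)$ generated by $P_n$ (acting by multiplication) and all $\partial_i^{[k]}$; one has $\mathcal{D}(P_n)=\bigoplus_{\alpha\in\mathbb{N}^n}P_n\partial^{[\alpha]}$ with $\partial^{[\alpha]}=\prod_i\partial_i^{[\alpha_i]}$. $\mathrm{Aut}_K(\mathcal{D}(P_n))$ is the group of $K$-algebra automorphisms. *)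

theory Defs
  imports Main "HOL-Library.Poly_Mapping"
begin

text \<open>The polynomial ring P_n = K[x_i | i :: 'n] in CARD('n) variables (the variables are
  indexed by a finite type 'n, so n = CARD('n) >= 1 is arbitrary but fixed).
  A monomial x^m is an exponent vector m :: 'n =>0 nat; a polynomial is a finitely
  supported map from monomials to coefficients in K.\<close>

type_synonym ('n, 'a) mpoly = "('n \<Rightarrow>\<^sub>0 nat) \<Rightarrow>\<^sub>0 'a"

definition var :: "'n \<Rightarrow> ('n, 'a::comm_ring_1) mpoly" where
  "var i = Poly_Mapping.single (Poly_Mapping.single i 1) 1"

definition const :: "'a::comm_ring_1 \<Rightarrow> ('n, 'a) mpoly" where
  "const c = Poly_Mapping.single 0 c"

definition mulop :: "('n, 'a::comm_ring_1) mpoly \<Rightarrow> (('n, 'a) mpoly \<Rightarrow> ('n, 'a) mpoly)" where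
  "mulop f = (\<lambda>q. f * q)"

text \<open>Divided-power derivative: dpow i k (x^m) = (m_i choose k) x^(m - k e_i), extended K-linearly
  (the term is zero when m_i < k since then the binomial coefficient vanishes).\<close>
definition dpow :: "'n \<Rightarrow> nat \<Rightarrow> ('n, 'a::comm_ring_1) mpoly \<Rightarrow> ('n, 'a) mpoly" where
  "dpow i k f = (\<Sum>m\<in>Poly_Mapping.keys f.
      Poly_Mapping.single (m - Poly_Mapping.single i k)
        (of_nat (Poly_Mapping.lookup m i choose k) * Poly_Mapping.lookup f m))"

text \<open>The ring D(P_n): the subalgebra of End_K(P_n) generated by the multiplication operators
  and all dpow i k (closed under sums and composition; K-scalars are the multiplication
  operators by constants, the identity is mulop 1).\<close>
inductive_set diffops :: "(('n, 'a::comm_ring_1) mpoly \<Rightarrow> ('n, 'a) mpoly) set" where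
  mul: "mulop f \<in> diffops"
| der: "dpow i k \<in> diffops"
| add: "a \<in> diffops \<Longrightarrow> b \<in> diffops \<Longrightarrow> (\<lambda>q. a q + b q) \<in> diffops"
| comp: "a \<in> diffops \<Longrightarrow> b \<in> diffops \<Longrightarrow> a \<circ> b \<in> diffops"

text \<open>K-algebra automorphisms of D(P_n) (only their values on diffops matter).\<close>
definition is_Kalg_aut ::
  "((('n, 'a::comm_ring_1) mpoly \<Rightarrow> ('n, 'a) mpoly) \<Rightarrow> (('n, 'a) mpoly \<Rightarrow> ('n, 'a) mpoly)) \<Rightarrow> bool"
where
  "is_Kalg_aut \<sigma> \<longleftrightarrow>
     bij_betw \<sigma> diffops diffops \<and>
     (\<forall>a\<in>diffops. \<forall>b\<in>diffops. \<sigma> (\<lambda>q. a q + b q) = (\<lambda>q. \<sigma> a q + \<sigma> b q)) \<and>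
     (\<forall>a\<in>diffops. \<forall>b\<in>diffops. \<sigma> (a \<circ> b) = \<sigma> a \<circ> \<sigma> b) \<and>
     \<sigma> id = id \<and>
     (\<forall>c. \<forall>a\<in>diffops. \<sigma> (mulop (const c) \<circ> a) = mulop (const c) \<circ> \<sigma> a)"

end

theory Submission
  imports Defs "HOL-Computational_Algebra.Primes"
begin

text \<open>If \<sigma> and \<tau> agree on the x_j, then \<rho> = \<tau>\<inverse> \<circ> \<sigma> is an algebra endomorphism of D(P_n)
  fixing every x_j, hence every multiplication operator. By induction on k it fixes every divided
  power \<partial>_i^[k]: the image A of \<partial>_i^[k+1] has the same commutators [A, x_j] = \<delta>_ij \<partial>_i^[k] as
  \<partial>_i^[k+1], so A = \<partial>_i^[k+1] + g for a polynomial g. In characteristic p the operator \<partial>_i^[k+1]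
  is nilpotent of order p, hence so is A. But (\<partial>_i^[k+1] + g)^p 1 = g^p + (terms of lower total
  degree), and g^p \<noteq> 0 for g \<noteq> 0 by the Frobenius identity g^p = \<Sum> c_m^p x^(pm). So g = 0, and
  \<rho> fixes the generators of D(P_n).\<close>

type_synonym ('n, 'a) op = "('n, 'a) mpoly \<Rightarrow> ('n, 'a) mpoly"

abbreviation lookup :: "('a \<Rightarrow>\<^sub>0 'b::zero) \<Rightarrow> 'a \<Rightarrow> 'b" where
  "lookup \<equiv> Poly_Mapping.lookup"

abbreviation keys :: "('a \<Rightarrow>\<^sub>0 'b::zero) \<Rightarrow> 'a set" where
  "keys \<equiv> Poly_Mapping.keys"

abbreviation single :: "'a \<Rightarrow> 'b::zero \<Rightarrow> 'a \<Rightarrow>\<^sub>0 'b" where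
  "single \<equiv> Poly_Mapping.single"

lemma mpoly_sum_monomials: "(f::('n,'a::comm_ring_1) mpoly) = (\<Sum>m\<in>keys f. single m (lookup f m))"
  by (rule poly_mapping_eqI)
    (auto simp: Poly_Mapping.lookup_sum Poly_Mapping.lookup_single when_def in_keys_iff)

lemma additive_eqI_monomials:
  fixes F G :: "('n,'a::comm_ring_1) mpoly \<Rightarrow> ('n,'b::comm_ring_1) mpoly"
  assumes "\<And>a b. F (a + b) = F a + F b" "\<And>a b. G (a + b) = G a + G b"
    and "\<And>m c. F (single m c) = G (single m c)"
  shows "F q = G q"
proof -
  have "F 0 = 0" "G 0 = 0"
    using assms(1)[of 0 0] assms(2)[of 0 0] by simp_all
  let ?t = "\<lambda>m. single m (lookup q m)"
  have "F q = sum (F \<circ> ?t) (keys q)"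
    by (subst sum_comp_morphism[of F]) (simp_all add: \<open>F 0 = 0\<close> assms(1) flip: mpoly_sum_monomials)
  also have "\<dots> = sum (G \<circ> ?t) (keys q)"
    by (simp add: assms(3))
  also have "\<dots> = G q"
    by (subst sum_comp_morphism[of G]) (simp_all add: \<open>G 0 = 0\<close> assms(2) flip: mpoly_sum_monomials)
  finally show ?thesis .
qed

lemma const_mult_single: "const c * single m a = single m (c * a)"
  by (simp add: const_def Poly_Mapping.mult_single)

lemma const_mult_const: "const a * const b = const (a * b)"
  by (simp add: const_def Poly_Mapping.mult_single)

lemma lookup_const_mult: "lookup (const c * f) m = c * lookup f m"
  by (simp add: const_def flip: Poly_Mapping.mult_map_scale_conv_mult)
     (simp add: Poly_Mapping.map.rep_eq when_def)

lemma var_mult_single: "var j * single m c = single (single j 1 + m) c"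
  by (simp add: var_def Poly_Mapping.mult_single)

lemma lookup_minus_single: "lookup (m - single i k) j = (if i = j then lookup m j - k else lookup m j)"
  by (simp add: Poly_Mapping.lookup_minus Poly_Mapping.lookup_single when_def)

lemma lookup_plus_single: "lookup (single i k + m) j = (if i = j then k + lookup m j else lookup m j)"
  by (simp add: Poly_Mapping.lookup_add Poly_Mapping.lookup_single when_def)

definition total_degree :: "('n::finite \<Rightarrow>\<^sub>0 nat) \<Rightarrow> nat" where
  "total_degree m = (\<Sum>j\<in>UNIV. lookup m j)"

lemma total_degree_add: "total_degree (a + b) = total_degree a + total_degree b"
  by (simp add: total_degree_def Poly_Mapping.lookup_add sum.distrib)

lemma total_degree_single: "total_degree (single j k) = k"
  by (simp add: total_degree_def Poly_Mapping.lookup_single when_def)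

lemma monomial_induct [case_names zero var]:
  fixes m :: "'n::finite \<Rightarrow>\<^sub>0 nat"
  assumes "P 0" "\<And>j m. P m \<Longrightarrow> P (single j 1 + m)"
  shows "P m"
proof (induction "total_degree m" arbitrary: m rule: less_induct)
  case less
  show ?case
  proof (cases "m = 0")
    case False
    then obtain j where "lookup m j \<noteq> 0"
      by (metis poly_mapping_eqI lookup_zero)
    then have m: "m = single j 1 + (m - single j 1)"
      by (intro poly_mapping_eqI) (auto simp: lookup_plus_single lookup_minus_single)
    then have "total_degree (m - single j 1) < total_degree m"
      by (metis total_degree_add total_degree_single less_add_one add.commute)
    then show ?thesis
      using less assms(2) m by metis
  qed (use assms(1) in simp)
qed

lemma keys_mult_total_degree_le:
  assumes "m \<in> keys (f * g)" "\<forall>a\<in>keys f. total_degree a \<le> d" "\<forall>b\<in>keys g. total_degree b \<le> e"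
  shows "total_degree m \<le> d + e"
  using Poly_Mapping.keys_mult[of f g] assms by (force simp: total_degree_add intro: add_mono)

lemma keys_power_total_degree_le:
  assumes "\<forall>a\<in>keys g. total_degree a \<le> d"
  shows "\<forall>m\<in>keys (g ^ j). total_degree m \<le> j * d"
proof (induction j)
  case 0
  then show ?case by (simp add: total_degree_def)
next
  case (Suc j)
  then show ?case
    using keys_mult_total_degree_le[OF _ assms Suc] by simp
qed

section \<open>Divided powers of partial derivatives\<close>

lemma dpow_eq_sum_over:
  assumes "finite S" "keys f \<subseteq> S"
  shows "dpow i k f = (\<Sum>m\<in>S. single (m - single i k) (of_nat (lookup m i choose k) * lookup f m))"
  unfolding dpow_def
  by (rule sum.mono_neutral_left) (use assms in \<open>auto simp: in_keys_iff\<close>)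

lemma dpow_add: "dpow i k (f + g) = dpow i k f + dpow i k g"
proof -
  let ?S = "keys f \<union> keys g \<union> keys (f + g)"
  let ?t = "\<lambda>h m. single (m - single i k) (of_nat (lookup m i choose k) * lookup h m)"
  have "dpow i k (f + g) = (\<Sum>m\<in>?S. ?t (f + g) m)"
    by (rule dpow_eq_sum_over) auto
  also have "\<dots> = (\<Sum>m\<in>?S. ?t f m) + (\<Sum>m\<in>?S. ?t g m)"
    by (simp add: Poly_Mapping.lookup_add distrib_left Poly_Mapping.single_add sum.distrib)
  also have "\<dots> = dpow i k f + dpow i k g"
    by (subst (1 2) dpow_eq_sum_over[symmetric]) auto
  finally show ?thesis .
qed

lemma dpow_const_mult: "dpow i k (const c * f) = const c * dpow i k f"
proof -
  let ?S = "keys f \<union> keys (const c * f)"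
  let ?t = "\<lambda>h m. single (m - single i k) (of_nat (lookup m i choose k) * lookup h m)"
  have "dpow i k (const c * f) = (\<Sum>m\<in>?S. ?t (const c * f) m)"
    by (rule dpow_eq_sum_over) auto
  also have "\<dots> = const c * (\<Sum>m\<in>?S. ?t f m)"
    by (simp add: lookup_const_mult sum_distrib_left const_mult_single mult.left_commute)
  also have "\<dots> = const c * dpow i k f"
    by (subst dpow_eq_sum_over[symmetric]) auto
  finally show ?thesis .
qed

lemma dpow_single: "dpow i k (single m c) = single (m - single i k) (of_nat (lookup m i choose k) * c)"
  by (subst dpow_eq_sum_over[of "{m}"]) (auto simp: Poly_Mapping.lookup_single)

lemma dpow_0: "dpow i 0 = id"
  by (simp add: fun_eq_iff dpow_def flip: mpoly_sum_monomials)

lemma choose_mult_shifted: "((n - b) choose a) * (n choose b) = ((a + b) choose a) * (n choose (a + b))"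
proof (cases "a + b \<le> n")
  case True
  have "(n choose (a + b)) * ((a + b) choose b) = (n choose b) * ((n - b) choose (a + b - b))"
    by (rule choose_mult) (use True in auto)
  then show ?thesis
    using binomial_symmetric[of b "a + b"] by (simp add: mult.commute)
next
  case False
  then show ?thesis
    by (cases "b \<le> n") (auto simp: binomial_eq_0)
qed

lemma dpow_dpow: "dpow i a (dpow i b f) = const (of_nat ((a + b) choose a)) * dpow i (a + b) f"
proof (rule additive_eqI_monomials[where F = "\<lambda>f. dpow i a (dpow i b f)"])
  fix m c
  have "m - single i b - single i a = m - single i (a + b)"
    by (rule poly_mapping_eqI) (auto simp: lookup_minus_single)
  moreover have "of_nat ((lookup m i - b) choose a) * (of_nat (lookup m i choose b) * c)
      = of_nat ((a + b) choose a) * (of_nat (lookup m i choose (a + b)) * (c::'b::comm_ring_1))"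
    using arg_cong[OF choose_mult_shifted[of "lookup m i" b a], of "of_nat :: nat \<Rightarrow> 'b"]
    by (simp only: of_nat_mult mult.assoc[symmetric])
  ultimately show "dpow i a (dpow i b (single m c))
      = const (of_nat ((a + b) choose a)) * dpow i (a + b) (single m c)"
    by (simp add: dpow_single const_mult_single lookup_minus_single)
qed (simp_all add: dpow_add distrib_left)

lemma dpow_Suc_var_mult:
  "dpow i (Suc k) (var j * f) = var j * dpow i (Suc k) f + (if i = j then dpow i k f else 0)"
proof (rule additive_eqI_monomials[where F = "\<lambda>f. dpow i (Suc k) (var j * f)"])
  fix m and c :: "'b::comm_ring_1"
  show "dpow i (Suc k) (var j * single m c)
      = var j * dpow i (Suc k) (single m c) + (if i = j then dpow i k (single m c) else 0)"
  proof (cases "i = j")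
    case False
    then have "single j 1 + m - single i (Suc k) = single j 1 + (m - single i (Suc k))"
      by (intro poly_mapping_eqI) (auto simp: lookup_minus_single lookup_plus_single)
    then show ?thesis
      using False by (simp add: var_mult_single dpow_single lookup_plus_single)
  next
    case True
    have shift: "single j 1 + m - single j (Suc k) = m - single j k"
      by (rule poly_mapping_eqI) (simp add: lookup_minus_single lookup_plus_single)
    have vanish: "single (m - single i k) (of_nat (lookup m i choose Suc k) * c)
        = single (single j 1 + (m - single i (Suc k))) (of_nat (lookup m i choose Suc k) * c)"
    proof (cases "Suc k \<le> lookup m i")
      case True
      then have "m - single i k = single j 1 + (m - single i (Suc k))"
        by (intro poly_mapping_eqI)
          (use \<open>i = j\<close> in \<open>auto simp: lookup_minus_single lookup_plus_single Suc_diff_Suc\<close>)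
      then show ?thesis by simp
    qed (simp add: binomial_eq_0)
    have "dpow i (Suc k) (var j * single m c)
        = single (m - single i k) (of_nat (Suc (lookup m i) choose Suc k) * c)"
      using True
      by (simp add: var_mult_single dpow_single lookup_plus_single shift plus_1_eq_Suc
          del: One_nat_def)
    also have "\<dots> = single (m - single i k) (of_nat (lookup m i choose k) * c)
        + single (m - single i k) (of_nat (lookup m i choose Suc k) * c)"
      by (simp add: distrib_right Poly_Mapping.single_add)
    also have "\<dots> = var j * dpow i (Suc k) (single m c) + dpow i k (single m c)"
      by (simp add: vanish var_mult_single dpow_single)
    finally show ?thesis using True by simp
  qed
qed (simp_all add: dpow_add distrib_left)

lemma dpow_Suc_comp_mulop_var:
  "dpow i (Suc k) \<circ> mulop (var j)
    = (\<lambda>q. (mulop (var j) \<circ> dpow i (Suc k)) q + (if i = j then dpow i k else mulop 0) q)"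
  by (simp add: fun_eq_iff mulop_def dpow_Suc_var_mult)

lemma dpow_funpow:
  "(dpow i k ^^ n) f = const (of_nat (\<Prod>l<n. (k + l * k) choose k)) * dpow i (n * k) f"
proof (induction n)
  case 0
  then show ?case by (simp add: dpow_0 const_def)
next
  case (Suc n)
  have "(dpow i k ^^ Suc n) f
      = const (of_nat (\<Prod>l<n. (k + l * k) choose k)) * dpow i k (dpow i (n * k) f)"
    by (simp add: Suc dpow_const_mult)
  also have "\<dots> = const (of_nat (\<Prod>l<Suc n. (k + l * k) choose k)) * dpow i (Suc n * k) f"
    by (simp only: dpow_dpow mult.assoc[symmetric] const_mult_const prod.lessThan_Suc
        of_nat_mult mult_Suc)
  finally show ?case .
qed

lemma dvd_choose_mult:
  assumes "k > 0"
  shows "p dvd ((p * k) choose k)"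
proof (cases "p = 0")
  case False
  have "Suc (p * k - 1) * ((p * k - 1) choose (k - 1))
      = (Suc (p * k - 1) choose Suc (k - 1)) * Suc (k - 1)"
    by (rule Suc_times_binomial_eq)
  moreover have "Suc (p * k - 1) = p * k" "Suc (k - 1) = k"
    using assms False by auto
  ultimately have "(p * ((p * k - 1) choose (k - 1))) * k = ((p * k) choose k) * k"
    by (metis mult.assoc mult.commute)
  then show ?thesis
    using assms by (metis dvd_triv_left mult_right_cancel not_gr0)
qed (use assms in simp)

lemma dpow_funpow_CHAR:
  assumes "k > 0" "CHAR('a::comm_ring_1) > 0"
  shows "(dpow i k ^^ CHAR('a)) = (mulop 0 :: ('n, 'a) op)"
proof
  fix f :: "('n, 'a) mpoly"
  let ?p = "CHAR('a)"
  have "k + (?p - 1) * k = ?p * k"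
    using assms by (cases ?p) (auto simp: algebra_simps)
  moreover have "((k + (?p - 1) * k) choose k) dvd (\<Prod>l<?p. (k + l * k) choose k)"
    by (rule dvd_prodI) (use assms in auto)
  ultimately have "?p dvd (\<Prod>l<?p. (k + l * k) choose k)"
    using dvd_choose_mult[OF assms(1), of ?p] dvd_trans by metis
  then have "of_nat (\<Prod>l<?p. (k + l * k) choose k) = (0::'a)"
    by (simp only: of_nat_eq_0_iff_char_dvd)
  then show "(dpow i k ^^ ?p) f = mulop 0 f"
    by (simp add: dpow_funpow mulop_def const_def)
qed

lemma keys_dpow_total_degree:
  fixes h :: "('n::finite, 'b::comm_ring_1) mpoly"
  assumes "m' \<in> keys (dpow i k h)"
  shows "\<exists>m\<in>keys h. total_degree m = total_degree m' + k"
proof -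
  have "keys (dpow i k h)
      \<subseteq> (\<Union>m\<in>keys h. keys (single (m - single i k) (of_nat (lookup m i choose k) * lookup h m)))"
    unfolding dpow_def by (rule Poly_Mapping.keys_sum)
  with assms obtain m where m: "m \<in> keys h"
    and m': "m' \<in> keys (single (m - single i k) (of_nat (lookup m i choose k) * lookup h m))"
    by blast
  then have "(of_nat (lookup m i choose k) :: 'b) \<noteq> 0" and m'_eq: "m' = m - single i k"
    by (auto split: if_splits)
  then have "k \<le> lookup m i"
    by (metis binomial_eq_0 of_nat_0 not_le)
  then have "m = m' + single i k"
    unfolding m'_eq
    by (intro poly_mapping_eqI)
      (auto simp: lookup_minus_single Poly_Mapping.lookup_add Poly_Mapping.lookup_single when_def)
  then have "total_degree m = total_degree m' + k"
    by (simp add: total_degree_add total_degree_single)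
  then show ?thesis
    using m by blast
qed

section \<open>Frobenius in characteristic p\<close>

lemma lookup_map_times: "lookup (Poly_Mapping.map ((*) (n::nat)) m) j = n * lookup m j"
  by (auto simp: Poly_Mapping.map.rep_eq when_def)

lemma total_degree_map_times: "total_degree (Poly_Mapping.map ((*) p) m) = p * total_degree m"
  by (simp add: total_degree_def lookup_map_times sum_distrib_left)

lemma single_power:
  "(single m c :: ('n, 'a::comm_ring_1) mpoly) ^ n = single (Poly_Mapping.map ((*) n) m) (c ^ n)"
proof (induction n)
  case 0
  have "Poly_Mapping.map ((*) 0) m = 0"
    by (rule poly_mapping_eqI) (simp add: lookup_map_times)
  then show ?case by (simp only: power_0 Poly_Mapping.single_one)
next
  case (Suc n)
  have "m + Poly_Mapping.map ((*) n) m = Poly_Mapping.map ((*) (Suc n)) m"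
    by (rule poly_mapping_eqI) (simp add: lookup_map_times Poly_Mapping.lookup_add)
  then show ?case using Suc by (simp only: power_Suc Poly_Mapping.mult_single)
qed

lemma CHAR_mpoly: "CHAR(('n, 'a::comm_ring_1) mpoly) = CHAR('a)"
proof (rule CHAR_eqI)
  fix x assume "of_nat x = (0::('n, 'a) mpoly)"
  then have "lookup (of_nat x :: ('n, 'a) mpoly) 0 = 0"
    by simp
  then show "CHAR('a) dvd x"
    by (simp add: of_nat_eq_0_iff_char_dvd Poly_Mapping.lookup_of_nat)
qed (simp flip: Poly_Mapping.single_of_nat)

lemma lookup_power_CHAR:
  fixes g :: "('n, 'a::comm_ring_1) mpoly"
  assumes "prime CHAR('a)" "m \<in> keys g"
  shows "lookup (g ^ CHAR('a)) (Poly_Mapping.map ((*) CHAR('a)) m) = lookup g m ^ CHAR('a)"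
proof -
  let ?p = "CHAR('a)"
  let ?M = "Poly_Mapping.map ((*) ?p)"
  have "inj ?M"
    using assms(1) prime_gt_0_nat
    by (intro injI poly_mapping_eqI) (metis lookup_map_times mult_left_cancel not_gr0)
  have "g ^ ?p = (\<Sum>m'\<in>keys g. single m' (lookup g m')) ^ ?p"
    by (subst mpoly_sum_monomials) (rule refl)
  also have "\<dots> = (\<Sum>m'\<in>keys g. single (?M m') (lookup g m' ^ ?p))"
    by (subst freshmans_dream_sum) (simp_all add: CHAR_mpoly assms(1) single_power)
  finally have "lookup (g ^ ?p) (?M m)
      = (\<Sum>m'\<in>keys g. lookup (single (?M m') (lookup g m' ^ ?p)) (?M m))"
    by (simp only: Poly_Mapping.lookup_sum)
  also have "\<dots> = (\<Sum>m'\<in>keys g. if m' = m then lookup g m' ^ ?p else 0)"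
    by (rule sum.cong) (auto simp: Poly_Mapping.lookup_single when_def inj_eq[OF \<open>inj ?M\<close>])
  finally show ?thesis
    using assms(2) by simp
qed

section \<open>Degree-lowering perturbations of a multiplication operator\<close>

lemma funpow_plus_mult_apply_1:
  fixes g :: "('n::finite, 'a::comm_ring_1) mpoly"
  assumes D_add: "\<And>a b. D (a + b) = D a + D b"
    and D_lowers: "\<And>h m'. m' \<in> keys (D h) \<Longrightarrow> \<exists>m\<in>keys h. total_degree m' < total_degree m"
    and deg_g: "\<forall>a\<in>keys g. total_degree a \<le> d"
  shows "\<exists>r. ((\<lambda>q. D q + g * q) ^^ j) 1 = g ^ j + r \<and> (\<forall>m\<in>keys r. total_degree m < j * d)"
proof (induction j)
  case 0
  then show ?case by (intro exI[of _ 0]) simp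
next
  case (Suc j)
  then obtain r where r: "((\<lambda>q. D q + g * q) ^^ j) 1 = g ^ j + r"
    and deg_r: "\<forall>m\<in>keys r. total_degree m < j * d"
    by blast
  have deg_gj: "\<forall>m\<in>keys (g ^ j). total_degree m \<le> j * d"
    by (rule keys_power_total_degree_le[OF deg_g])
  define r' where "r' = D (g ^ j) + D r + g * r"
  have "((\<lambda>q. D q + g * q) ^^ Suc j) 1 = g ^ Suc j + r'"
    using r by (simp add: r'_def D_add distrib_left add_ac)
  moreover have "total_degree m < Suc j * d" if "m \<in> keys r'" for m
  proof -
    have "m \<in> keys (D (g ^ j)) \<or> m \<in> keys (D r) \<or> m \<in> keys (g * r)"
      using that Poly_Mapping.keys_add[of "D (g ^ j) + D r" "g * r"]
        Poly_Mapping.keys_add[of "D (g ^ j)" "D r"]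
      unfolding r'_def by blast
    then show ?thesis
    proof (elim disjE)
      assume "m \<in> keys (D (g ^ j))"
      then obtain a where "a \<in> keys (g ^ j)" "total_degree m < total_degree a"
        using D_lowers by blast
      moreover from this(1) have "total_degree a \<le> j * d"
        using deg_gj by blast
      ultimately show ?thesis
        by simp
    next
      assume "m \<in> keys (D r)"
      then obtain a where "a \<in> keys r" "total_degree m < total_degree a"
        using D_lowers by blast
      moreover from this(1) have "total_degree a < j * d"
        using deg_r by blast
      ultimately show ?thesis
        by simp
    next
      assume "m \<in> keys (g * r)"
      then obtain a b where "m = a + b" "a \<in> keys g" "b \<in> keys r"
        using Poly_Mapping.keys_mult[of g r] by blast
      moreover from this(2,3) have "total_degree a \<le> d" "total_degree b < j * d"
        using deg_g deg_r by blast+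
      ultimately show ?thesis
        by (simp add: total_degree_add)
    qed
  qed
  ultimately show ?case by blast
qed

lemma funpow_CHAR_plus_mult_apply_1_eq_0D:
  fixes g :: "('n::finite, 'a::idom) mpoly"
  assumes D_add: "\<And>a b. D (a + b) = D a + D b"
    and D_lowers: "\<And>h m'. m' \<in> keys (D h) \<Longrightarrow> \<exists>m\<in>keys h. total_degree m' < total_degree m"
    and "prime CHAR('a)"
    and "((\<lambda>q. D q + g * q) ^^ CHAR('a)) 1 = 0"
  shows "g = 0"
proof (rule ccontr)
  assume "g \<noteq> 0"
  let ?p = "CHAR('a)"
  define d where "d = Max (total_degree ` keys g)"
  have deg_g: "\<forall>a\<in>keys g. total_degree a \<le> d"
    unfolding d_def by auto
  have "d \<in> total_degree ` keys g"
    unfolding d_def using \<open>g \<noteq> 0\<close> by (intro Max_in) auto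
  then obtain m where m: "m \<in> keys g" "total_degree m = d"
    by blast
  from funpow_plus_mult_apply_1[where D = D and j = "CHAR('a)", OF D_add D_lowers deg_g] obtain r
    where r: "((\<lambda>q. D q + g * q) ^^ ?p) 1 = g ^ ?p + r"
      and deg_r: "\<forall>m\<in>keys r. total_degree m < ?p * d"
    by blast
  let ?M = "Poly_Mapping.map ((*) ?p) m"
  have "g ^ ?p + r = 0"
    using r assms(4) by simp
  then have "lookup (g ^ ?p) ?M + lookup r ?M = 0"
    by (metis Poly_Mapping.lookup_add Poly_Mapping.lookup_zero)
  moreover have "?M \<notin> keys r"
    using deg_r m(2) by (auto simp: total_degree_map_times)
  ultimately have "lookup (g ^ ?p) ?M = 0"
    by (simp add: in_keys_iff)
  then show False
    using lookup_power_CHAR[OF assms(3) m(1)] m(1) by (simp add: in_keys_iff)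
qed

section \<open>Operators commuting with the variables\<close>

definition linear_op :: "('n, 'a::comm_ring_1) op \<Rightarrow> bool" where
  "linear_op a \<longleftrightarrow> (\<forall>f g. a (f + g) = a f + a g) \<and> (\<forall>c f. a (const c * f) = const c * a f)"

lemma diffops_linear_op: "a \<in> diffops \<Longrightarrow> linear_op a"
  by (induction rule: diffops.induct)
    (simp_all add: linear_op_def mulop_def distrib_left mult.left_commute add_ac dpow_add dpow_const_mult)

lemma linear_op_commuting_with_vars:
  fixes c :: "('n::finite, 'a::comm_ring_1) op"
  assumes "linear_op c" "\<And>j q. c (var j * q) = var j * c q"
  shows "c q = q * c 1"
proof (rule additive_eqI_monomials[where F = c])
  have monomial: "c (single m 1) = single m 1 * c 1" for m
  proof (induction m rule: monomial_induct)
    case (var j m)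
    have "c (single (single j 1 + m) 1) = c (var j * single m 1)"
      by (simp only: var_mult_single)
    also have "\<dots> = var j * (single m 1 * c 1)"
      by (simp only: assms(2) var)
    also have "\<dots> = single (single j 1 + m) 1 * c 1"
      by (simp only: var_mult_single flip: mult.assoc)
    finally show ?case .
  qed simp
  fix m :: "'n \<Rightarrow>\<^sub>0 nat" and s :: 'a
  have "c (single m s) = c (const s * single m 1)"
    by (simp only: const_mult_single mult_1_right)
  also have "\<dots> = const s * (single m 1 * c 1)"
    using assms(1) monomial by (simp only: linear_op_def)
  also have "\<dots> = single m s * c 1"
    by (simp only: const_mult_single mult_1_right flip: mult.assoc)
  finally show "c (single m s) = single m s * c 1" .
next
  show "c (a + b) = c a + c b" for a b
    using assms(1) by (simp add: linear_op_def)
qed (simp add: distrib_right)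

lemma id_eq_mulop_1: "id = mulop 1"
  by (simp add: mulop_def fun_eq_iff)

lemma id_in_diffops: "id \<in> diffops"
  by (simp add: id_eq_mulop_1 diffops.mul)

lemma mulop_add: "mulop (a + b) = (\<lambda>q. mulop a q + mulop b q)"
  by (simp add: mulop_def fun_eq_iff distrib_right)

lemma mulop_mult: "mulop (a * b) = mulop a \<circ> mulop b"
  by (simp add: mulop_def fun_eq_iff mult.assoc)

lemma funpow_in_diffops: "D \<in> diffops \<Longrightarrow> D ^^ n \<in> diffops"
proof (induction n)
  case 0
  show ?case unfolding funpow.simps(1) by (rule id_in_diffops)
next
  case (Suc n)
  show ?case unfolding funpow.simps(2) by (rule diffops.comp[OF Suc.prems Suc.IH[OF Suc.prems]])
qed

locale diffops_endo =
  fixes \<rho> :: "('n, 'a::comm_ring_1) op \<Rightarrow> ('n, 'a) op"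
  assumes maps_diffops: "a \<in> diffops \<Longrightarrow> \<rho> a \<in> diffops"
    and map_add: "a \<in> diffops \<Longrightarrow> b \<in> diffops \<Longrightarrow> \<rho> (\<lambda>q. a q + b q) = (\<lambda>q. \<rho> a q + \<rho> b q)"
    and map_comp: "a \<in> diffops \<Longrightarrow> b \<in> diffops \<Longrightarrow> \<rho> (a \<circ> b) = \<rho> a \<circ> \<rho> b"
    and map_id: "\<rho> id = id"
    and map_scalar: "a \<in> diffops \<Longrightarrow> \<rho> (mulop (const c) \<circ> a) = mulop (const c) \<circ> \<rho> a"
begin

lemma map_funpow: "D \<in> diffops \<Longrightarrow> \<rho> (D ^^ n) = \<rho> D ^^ n"
proof (induction n)
  case 0
  show ?case by (simp only: funpow.simps(1) map_id)
next
  case (Suc n)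
  show ?case
    by (simp only: funpow.simps(2) map_comp[OF Suc.prems funpow_in_diffops[OF Suc.prems]]
        Suc.IH[OF Suc.prems])
qed

end

lemma Kalg_aut_diffops_endo: "is_Kalg_aut \<sigma> \<Longrightarrow> diffops_endo \<sigma>"
  unfolding is_Kalg_aut_def diffops_endo_def by (blast dest: bij_betwE)

lemma Kalg_aut_inv_diffops_endo:
  fixes \<tau> :: "('n, 'a::comm_ring_1) op \<Rightarrow> ('n, 'a) op"
  assumes "is_Kalg_aut \<tau>"
  shows "diffops_endo (inv_into diffops \<tau>)"
proof -
  interpret \<tau>: diffops_endo \<tau>
    using assms by (rule Kalg_aut_diffops_endo)
  have bij: "bij_betw \<tau> diffops diffops"
    using assms unfolding is_Kalg_aut_def by blast
  let ?\<tau>' = "inv_into diffops \<tau>"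
  have inv_in: "?\<tau>' a \<in> diffops" and \<tau>_inv: "\<tau> (?\<tau>' a) = a" if "a \<in> diffops" for a
    using that bij by (auto simp: bij_betw_def inv_into_into f_inv_into_f)
  have inv_\<tau>: "?\<tau>' (\<tau> a) = a" if "a \<in> diffops" for a
    using that bij by (simp add: bij_betw_def)
  show ?thesis
  proof
    fix a b :: "('n, 'a) op"
    assume a: "a \<in> diffops" and b: "b \<in> diffops"
    have "?\<tau>' (\<lambda>q. a q + b q) = ?\<tau>' (\<tau> (\<lambda>q. ?\<tau>' a q + ?\<tau>' b q))"
      by (simp only: \<tau>.map_add[OF inv_in[OF a] inv_in[OF b]] \<tau>_inv[OF a] \<tau>_inv[OF b])
    also have "\<dots> = (\<lambda>q. ?\<tau>' a q + ?\<tau>' b q)"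
      by (intro inv_\<tau> diffops.add inv_in a b)
    finally show "?\<tau>' (\<lambda>q. a q + b q) = (\<lambda>q. ?\<tau>' a q + ?\<tau>' b q)" .
    have "?\<tau>' (a \<circ> b) = ?\<tau>' (\<tau> (?\<tau>' a \<circ> ?\<tau>' b))"
      by (simp only: \<tau>.map_comp[OF inv_in[OF a] inv_in[OF b]] \<tau>_inv[OF a] \<tau>_inv[OF b])
    also have "\<dots> = ?\<tau>' a \<circ> ?\<tau>' b"
      by (intro inv_\<tau> diffops.comp inv_in a b)
    finally show "?\<tau>' (a \<circ> b) = ?\<tau>' a \<circ> ?\<tau>' b" .
  next
    show "?\<tau>' id = id"
      using inv_\<tau>[OF id_in_diffops] by (simp only: \<tau>.map_id)
  next
    fix a :: "('n, 'a) op" and c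
    assume a: "a \<in> diffops"
    have "?\<tau>' (mulop (const c) \<circ> a) = ?\<tau>' (\<tau> (mulop (const c) \<circ> ?\<tau>' a))"
      by (simp only: \<tau>.map_scalar[OF inv_in[OF a]] \<tau>_inv[OF a])
    also have "\<dots> = mulop (const c) \<circ> ?\<tau>' a"
      by (intro inv_\<tau> diffops.comp diffops.mul inv_in a)
    finally show "?\<tau>' (mulop (const c) \<circ> a) = mulop (const c) \<circ> ?\<tau>' a" .
  qed (rule inv_in)
qed

lemma diffops_endo_comp:
  assumes "diffops_endo \<rho>" "diffops_endo \<rho>'"
  shows "diffops_endo (\<rho> \<circ> \<rho>')"
  using assms unfolding diffops_endo_def by (simp add: diffops.add diffops.comp)

locale diffops_endo_fixing_vars = diffops_endo \<rho> for \<rho> :: "('n::finite, 'a::idom) op \<Rightarrow> ('n, 'a) op" +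
  assumes map_mulop_var: "\<rho> (mulop (var j)) = mulop (var j)"
begin

lemma map_mulop: "\<rho> (mulop f) = mulop f"
proof -
  have scalar: "\<rho> (mulop (const c)) = mulop (const c)" for c
    using map_scalar[OF id_in_diffops] by (simp add: map_id)
  have monomial: "\<rho> (mulop (single m 1)) = mulop (single m 1)" for m
  proof (induction m rule: monomial_induct)
    case zero
    show ?case
      by (simp only: Poly_Mapping.single_one map_id flip: id_eq_mulop_1)
  next
    case (var j m)
    have factor: "mulop (single (single j 1 + m) 1) = mulop (var j) \<circ> mulop (single m 1)"
      by (simp add: var_mult_single flip: mulop_mult)
    show ?case
      unfolding factor map_comp[OF diffops.mul diffops.mul] map_mulop_var var ..
  qed
  have scaled_monomial: "\<rho> (mulop (single m c)) = mulop (single m c)" for m c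
  proof -
    have "mulop (single m c) = mulop (const c) \<circ> mulop (single m 1)"
      by (simp add: const_mult_single flip: mulop_mult)
    then show ?thesis
      by (simp add: map_scalar diffops.mul monomial)
  qed
  have "\<rho> (mulop (\<Sum>m\<in>S. single m (lookup f m))) = mulop (\<Sum>m\<in>S. single m (lookup f m))"
    if "finite S" for S
    using that
  proof (induction S rule: finite_induct)
    case empty
    show ?case using scalar[of 0] by (simp add: const_def)
  next
    case (insert m S)
    then show ?case
      by (simp add: mulop_add map_add diffops.mul scaled_monomial)
  qed
  then show ?thesis
    by (subst (1 2) mpoly_sum_monomials) simp
qed

lemma map_dpow_Suc_eq_plus_mulop:
  assumes "\<rho> (dpow i k) = dpow i k"
  shows "\<exists>g. \<rho> (dpow i (Suc k)) = (\<lambda>q. dpow i (Suc k) q + g * q)"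
proof -
  let ?D = "dpow i (Suc k) :: ('n, 'a) op"
  let ?A = "\<rho> ?D"
  have A_var_mult: "?A (var j * q) = var j * ?A q + (if i = j then dpow i k q else 0)" for j q
  proof -
    let ?E = "if i = j then dpow i k else mulop 0 :: ('n, 'a) op"
    have E_in: "?E \<in> diffops"
      by (simp add: diffops.der diffops.mul)
    have E_fixed: "\<rho> ?E = ?E"
      using assms by (cases "i = j") (simp_all add: map_mulop)
    have "?A \<circ> mulop (var j) = \<rho> (?D \<circ> mulop (var j))"
      by (simp only: map_comp[OF diffops.der diffops.mul] map_mulop_var)
    also have "\<dots> = \<rho> (\<lambda>q. (mulop (var j) \<circ> ?D) q + ?E q)"
      by (simp only: dpow_Suc_comp_mulop_var)
    also have "\<dots> = (\<lambda>q. \<rho> (mulop (var j) \<circ> ?D) q + \<rho> ?E q)"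
      by (rule map_add[OF diffops.comp[OF diffops.mul diffops.der] E_in])
    also have "\<dots> = (\<lambda>q. (mulop (var j) \<circ> ?A) q + ?E q)"
      by (simp only: map_comp[OF diffops.mul diffops.der] map_mulop_var E_fixed)
    finally have "?A \<circ> mulop (var j) = (\<lambda>q. (mulop (var j) \<circ> ?A) q + ?E q)" .
    from fun_cong[OF this, of q] show ?thesis
      by (simp add: mulop_def)
  qed
  let ?c = "\<lambda>q. ?A q - ?D q"
  have "linear_op ?c"
    using diffops_linear_op[OF maps_diffops[OF diffops.der]]
    by (simp add: linear_op_def dpow_add dpow_const_mult right_diff_distrib)
  moreover have "?c (var j * q) = var j * ?c q" for j q
    using A_var_mult[of j q] dpow_Suc_var_mult[of i k j q] by (simp add: right_diff_distrib)
  ultimately have "?c q = q * ?c 1" for q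
    by (rule linear_op_commuting_with_vars)
  then have "?A = (\<lambda>q. ?D q + ?c 1 * q)"
    by (simp add: fun_eq_iff algebra_simps)
  then show ?thesis ..
qed

lemma map_dpow:
  assumes "CHAR('a) > 0"
  shows "\<rho> (dpow i k) = dpow i k"
proof (induction k)
  case 0
  show ?case by (simp only: dpow_0 map_id)
next
  case (Suc k)
  let ?D = "dpow i (Suc k) :: ('n, 'a) op"
  obtain g where A: "\<rho> ?D = (\<lambda>q. ?D q + g * q)"
    using map_dpow_Suc_eq_plus_mulop[OF Suc.IH] by blast
  have "(\<lambda>q. ?D q + g * q) ^^ CHAR('a) = mulop 0"
    using map_funpow[OF diffops.der[of i "Suc k"], of "CHAR('a)"] assms
    by (simp add: A dpow_funpow_CHAR map_mulop)
  then have nilpotent: "((\<lambda>q. ?D q + g * q) ^^ CHAR('a)) 1 = 0"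
    by (simp add: mulop_def)
  have lowers: "\<exists>m\<in>keys h. total_degree m' < total_degree m" if "m' \<in> keys (?D h)" for h m'
    using keys_dpow_total_degree[OF that] by force
  have "prime CHAR('a)"
    using assms by (rule prime_CHAR_semidom)
  from funpow_CHAR_plus_mult_apply_1_eq_0D[where D = ?D and g = g, OF dpow_add lowers this nilpotent]
  have "g = 0" .
  then show ?case
    using A by (simp add: fun_eq_iff)
qed

lemma map_diffops:
  assumes "CHAR('a) > 0" "a \<in> diffops"
  shows "\<rho> a = a"
  using assms(2)
proof (induction rule: diffops.induct)
  case (mul f)
  show ?case by (rule map_mulop)
next
  case (der i k)
  show ?case by (rule map_dpow[OF assms(1)])
next
  case (add a b)
  then show ?case by (simp only: map_add)
next
  case (comp a b)
  then show ?case by (simp only: map_comp)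
qed

end

theorem theorem1p1:
  fixes \<sigma> \<tau> :: "((('n::finite, 'a::field) mpoly \<Rightarrow> ('n, 'a) mpoly) \<Rightarrow> (('n, 'a) mpoly \<Rightarrow> ('n, 'a) mpoly))"
  assumes "CHAR('a) > 0"
    and "is_Kalg_aut \<sigma>" and "is_Kalg_aut \<tau>"
  shows "(\<forall>a\<in>diffops. \<sigma> a = \<tau> a) \<longleftrightarrow> (\<forall>i. \<sigma> (mulop (var i)) = \<tau> (mulop (var i)))"
proof
  assume "\<forall>a\<in>diffops. \<sigma> a = \<tau> a"
  then show "\<forall>i. \<sigma> (mulop (var i)) = \<tau> (mulop (var i))"
    by (simp add: diffops.mul)
next
  assume vars: "\<forall>i. \<sigma> (mulop (var i)) = \<tau> (mulop (var i))"
  have bij: "bij_betw \<tau> diffops diffops"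
    using assms(3) unfolding is_Kalg_aut_def by blast
  let ?\<rho> = "inv_into diffops \<tau> \<circ> \<sigma>"
  interpret diffops_endo ?\<rho>
    using assms(2,3) by (intro diffops_endo_comp Kalg_aut_inv_diffops_endo Kalg_aut_diffops_endo)
  interpret diffops_endo_fixing_vars ?\<rho>
    by unfold_locales (use vars bij in \<open>simp add: bij_betw_def diffops.mul\<close>)
  show "\<forall>a\<in>diffops. \<sigma> a = \<tau> a"
  proof
    fix a :: "('n, 'a) op"
    assume a: "a \<in> diffops"
    then have "\<sigma> a \<in> \<tau> ` diffops"
      using assms(2) bij unfolding is_Kalg_aut_def bij_betw_def by blast
    then have "\<sigma> a = \<tau> (?\<rho> a)"
      by (simp add: f_inv_into_f)
    also have "?\<rho> a = a"
      by (rule map_diffops[OF assms(1) a])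
    finally show "\<sigma> a = \<tau> a" .
  qed
qed

end
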